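(* Let $M$ be a measure-once quantum finite automaton that uses both a left and a right end-marker. Then there exists a measure-once quantum finite automaton $M'$ that uses only a right end-marker and is equivalent to $M$, i.e. for every $x\in\Sigma^*$ the probability that $M$ accepts $x$ equals the probability that $M'$ accepts $x$.
   Context: A measure-once QFA with one (right) end-marker over $\Sigma$ is a tuple $(Q,\Sigma,\{U_\sigma\}_{\sigma\in\Sigma\cup\{\$\}},q_0,F)$, with $Q$ finite indexing an orthonormal basis of $\mathbb{C}^Q$, $\$\notin\Sigma$, each $U_\sigma$ unitary, $q_0\in Q$, $F\subseteq Q$; its acceptance probability on $x=x_1\cdots x_n$ is $\|P\,U_\$U_{x_n}\cdots U_{x_1}|q_0\rangle\|^2$, $P$ being the orthogonal projection onto $\mathrm{span}\{|q\rangle:q\in F\}$. A measure-once QFA with both end-markers additionally has a unitary $U_{¢}$ for a left end-marker ${¢}\notin\Sigma\cup\{\$\}$ and reads ${¢}x\$$, so its acceptance probability is $\|P\,U_\$U_{x_n}\cdots U_{x_1}U_{¢}|q_0\rangle\|^2$. *)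

theory Defs
  imports "Jordan_Normal_Form.Matrix"
begin

definition cadj :: "complex mat \<Rightarrow> complex mat" where
  "cadj A = mat (dim_col A) (dim_row A) (\<lambda>(i,j). cnj (A $$ (j,i)))"

definition unitary_mat :: "nat \<Rightarrow> complex mat \<Rightarrow> bool" where
  "unitary_mat n A \<longleftrightarrow> A \<in> carrier_mat n n \<and> cadj A * A = 1\<^sub>m n \<and> A * cadj A = 1\<^sub>m n"

text \<open>Measure-once QFA with only a right end-marker over alphabet 'a:
  number of basis states (Q = {0..<n}), unitaries U_sigma, unitary U_$,
  initial state q0, accepting states F.\<close>

record 'a mo_qfa_r =
  nstates_r :: nat
  U_r :: "'a \<Rightarrow> complex mat"
  Uend_r :: "complex mat"
  init_r :: nat
  acc_r :: "nat set"

record 'a mo_qfa_lr =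
  nstates_lr :: nat
  U_lr :: "'a \<Rightarrow> complex mat"
  Ubegin_lr :: "complex mat"
  Uend_lr :: "complex mat"
  init_lr :: nat
  acc_lr :: "nat set"

definition wf_qfa_r :: "'a set \<Rightarrow> 'a mo_qfa_r \<Rightarrow> bool" where
  "wf_qfa_r Alph M \<longleftrightarrow>
     init_r M < nstates_r M \<and> acc_r M \<subseteq> {..<nstates_r M} \<and>
     (\<forall>s\<in>Alph. unitary_mat (nstates_r M) (U_r M s)) \<and>
     unitary_mat (nstates_r M) (Uend_r M)"

definition wf_qfa_lr :: "'a set \<Rightarrow> 'a mo_qfa_lr \<Rightarrow> bool" where
  "wf_qfa_lr Alph M \<longleftrightarrow>
     init_lr M < nstates_lr M \<and> acc_lr M \<subseteq> {..<nstates_lr M} \<and>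
     (\<forall>s\<in>Alph. unitary_mat (nstates_lr M) (U_lr M s)) \<and>
     unitary_mat (nstates_lr M) (Ubegin_lr M) \<and>
     unitary_mat (nstates_lr M) (Uend_lr M)"

definition run_word :: "('a \<Rightarrow> complex mat) \<Rightarrow> 'a list \<Rightarrow> complex vec \<Rightarrow> complex vec" where
  "run_word U xs v = fold (\<lambda>s w. U s *\<^sub>v w) xs v"

text \<open>Squared norm of the orthogonal projection onto span{|q> : q in F}.\<close>

definition proj_norm_sq :: "nat set \<Rightarrow> complex vec \<Rightarrow> real" where
  "proj_norm_sq F w = (\<Sum>q\<in>F. (cmod (w $ q))\<^sup>2)"

definition accept_prob_r :: "'a mo_qfa_r \<Rightarrow> 'a list \<Rightarrow> real" where
  "accept_prob_r M x =
     proj_norm_sq (acc_r M)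
       (Uend_r M *\<^sub>v run_word (U_r M) x (unit_vec (nstates_r M) (init_r M)))"

definition accept_prob_lr :: "'a mo_qfa_lr \<Rightarrow> 'a list \<Rightarrow> real" where
  "accept_prob_lr M x =
     proj_norm_sq (acc_lr M)
       (Uend_lr M *\<^sub>v run_word (U_lr M) x
          (Ubegin_lr M *\<^sub>v unit_vec (nstates_lr M) (init_lr M)))"

end

theory Submission
  imports Defs
begin

text \<open>Conjugating every letter unitary by \<open>V = U\<^sub>\<cent>\<close> and absorbing \<open>V\<close> into the
  right end-marker telescopes:
  \<open>U\<^sub>$ V \<cdot> V\<^sup>\<dagger> U\<^sub>x\<^sub>n V \<cdots> V\<^sup>\<dagger> U\<^sub>x\<^sub>1 V = U\<^sub>$ U\<^sub>x\<^sub>n \<cdots> U\<^sub>x\<^sub>1 V\<close>, so the automaton with letter unitaries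
  \<open>V\<^sup>\<dagger> U\<^sub>\<sigma> V\<close>, right end-marker \<open>U\<^sub>$ V\<close> and the same initial and accepting states
  reaches, on every input, exactly the final state of the two-sided automaton.\<close>

lemma unitary_mat_carrier: "unitary_mat n A \<Longrightarrow> A \<in> carrier_mat n n"
  by (simp add: unitary_mat_def)

lemma cadj_carrier_mat: "A \<in> carrier_mat n m \<Longrightarrow> cadj A \<in> carrier_mat m n"
  by (simp add: cadj_def)

lemma cadj_mult:
  "A \<in> carrier_mat n m \<Longrightarrow> B \<in> carrier_mat m k \<Longrightarrow> cadj (A * B) = cadj B * cadj A"
  unfolding cadj_def by (rule eq_matI) (auto simp: scalar_prod_def intro!: sum.cong)

lemma cadj_cadj: "cadj (cadj A) = A"
  unfolding cadj_def by (rule eq_matI) auto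

lemma unitary_mat_cadj: "unitary_mat n A \<Longrightarrow> unitary_mat n (cadj A)"
  by (auto simp: unitary_mat_def cadj_cadj cadj_carrier_mat)

lemma unitary_mat_mult:
  assumes "unitary_mat n A" "unitary_mat n B"
  shows "unitary_mat n (A * B)"
proof -
  have A: "A \<in> carrier_mat n n" and B: "B \<in> carrier_mat n n"
    using assms by (auto dest: unitary_mat_carrier)
  have A': "cadj A \<in> carrier_mat n n" and B': "cadj B \<in> carrier_mat n n"
    using A B by (auto intro: cadj_carrier_mat)
  have "cadj (A * B) * (A * B) = cadj B * (cadj A * A) * B"
    using A B A' B' by (simp add: cadj_mult assoc_mult_mat[of _ n n _ n _ n])
  also have "\<dots> = 1\<^sub>m n"
    using assms B B' by (simp add: unitary_mat_def)
  finally have left: "cadj (A * B) * (A * B) = 1\<^sub>m n" .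
  have "(A * B) * cadj (A * B) = A * (B * cadj B) * cadj A"
    using A B A' B' by (simp add: cadj_mult assoc_mult_mat[of _ n n _ n _ n])
  also have "\<dots> = 1\<^sub>m n"
    using assms A A' by (simp add: unitary_mat_def)
  finally show ?thesis
    using left A B by (simp add: unitary_mat_def)
qed

lemma unitary_mat_cancel:
  assumes "unitary_mat n V" "v \<in> carrier_vec n"
  shows "cadj V *\<^sub>v (V *\<^sub>v v) = v" and "V *\<^sub>v (cadj V *\<^sub>v v) = v"
proof -
  have V: "V \<in> carrier_mat n n" and V': "cadj V \<in> carrier_mat n n"
    using assms(1) by (auto dest: unitary_mat_carrier intro: cadj_carrier_mat)
  have "cadj V *\<^sub>v (V *\<^sub>v v) = (cadj V * V) *\<^sub>v v"
    using V V' assms(2) by simp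
  then show "cadj V *\<^sub>v (V *\<^sub>v v) = v"
    using assms by (simp add: unitary_mat_def)
  have "V *\<^sub>v (cadj V *\<^sub>v v) = (V * cadj V) *\<^sub>v v"
    using V V' assms(2) by simp
  then show "V *\<^sub>v (cadj V *\<^sub>v v) = v"
    using assms by (simp add: unitary_mat_def)
qed

lemma run_word_carrier_vec:
  assumes "\<forall>s\<in>Alph. U s \<in> carrier_mat n n" "set xs \<subseteq> Alph" "v \<in> carrier_vec n"
  shows "run_word U xs v \<in> carrier_vec n"
  using assms(2,3)
proof (induction xs arbitrary: v)
  case Nil
  then show ?case by (simp add: run_word_def)
next
  case (Cons s xs)
  then have "U s *\<^sub>v v \<in> carrier_vec n"
    using assms(1) by auto
  then show ?case
    using Cons by (simp add: run_word_def)
qed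

lemma run_word_conjugate:
  assumes U: "\<forall>s\<in>Alph. U s \<in> carrier_mat n n" and V: "unitary_mat n V"
    and "set xs \<subseteq> Alph" "v \<in> carrier_vec n"
  shows "run_word (\<lambda>s. cadj V * U s * V) xs v = cadj V *\<^sub>v run_word U xs (V *\<^sub>v v)"
  using assms(3,4)
proof (induction xs arbitrary: v)
  case Nil
  then show ?case
    using V by (simp add: run_word_def unitary_mat_cancel)
next
  case (Cons s xs)
  have Vc: "V \<in> carrier_mat n n" and V': "cadj V \<in> carrier_mat n n"
    using V by (auto dest: unitary_mat_carrier intro: cadj_carrier_mat)
  have Us: "U s \<in> carrier_mat n n"
    using U Cons.prems by auto
  let ?w = "U s *\<^sub>v (V *\<^sub>v v)"
  have w: "?w \<in> carrier_vec n"
    using Us Vc Cons.prems by auto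
  have step: "(cadj V * U s * V) *\<^sub>v v = cadj V *\<^sub>v ?w"
    using Vc V' Us Cons.prems by (simp add: assoc_mult_mat_vec[of _ n n _ n])
  have "run_word (\<lambda>s. cadj V * U s * V) xs (cadj V *\<^sub>v ?w)
      = cadj V *\<^sub>v run_word U xs (V *\<^sub>v (cadj V *\<^sub>v ?w))"
    using Cons V' w by simp
  also have "\<dots> = cadj V *\<^sub>v run_word U xs ?w"
    using V w by (simp add: unitary_mat_cancel)
  finally show ?case
    using step by (simp add: run_word_def)
qed

definition absorb_left_endmarker :: "'a mo_qfa_lr \<Rightarrow> 'a mo_qfa_r" where
  "absorb_left_endmarker M =
     \<lparr>nstates_r = nstates_lr M,
      U_r = (\<lambda>s. cadj (Ubegin_lr M) * U_lr M s * Ubegin_lr M),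
      Uend_r = Uend_lr M * Ubegin_lr M,
      init_r = init_lr M,
      acc_r = acc_lr M\<rparr>"

lemma wf_qfa_r_absorb_left_endmarker:
  "wf_qfa_lr Alph M \<Longrightarrow> wf_qfa_r Alph (absorb_left_endmarker M)"
  unfolding wf_qfa_lr_def wf_qfa_r_def absorb_left_endmarker_def
  by (auto intro!: unitary_mat_mult unitary_mat_cadj)

lemma accept_prob_r_absorb_left_endmarker:
  assumes wf: "wf_qfa_lr Alph M" and x: "set x \<subseteq> Alph"
  shows "accept_prob_r (absorb_left_endmarker M) x = accept_prob_lr M x"
proof -
  let ?n = "nstates_lr M" and ?V = "Ubegin_lr M" and ?E = "Uend_lr M"
  let ?v = "?V *\<^sub>v unit_vec ?n (init_lr M)"
  have V: "unitary_mat ?n ?V" and E: "?E \<in> carrier_mat ?n ?n"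
    and U: "\<forall>s\<in>Alph. U_lr M s \<in> carrier_mat ?n ?n"
    using wf by (auto simp: wf_qfa_lr_def dest: unitary_mat_carrier)
  have Vc: "?V \<in> carrier_mat ?n ?n" and V': "cadj ?V \<in> carrier_mat ?n ?n"
    using V by (auto dest: unitary_mat_carrier intro: cadj_carrier_mat)
  have r: "run_word (U_lr M) x ?v \<in> carrier_vec ?n"
    using run_word_carrier_vec[OF U x] Vc by simp
  have "(?E * ?V) *\<^sub>v run_word (\<lambda>s. cadj ?V * U_lr M s * ?V) x (unit_vec ?n (init_lr M))
      = (?E * ?V) *\<^sub>v (cadj ?V *\<^sub>v run_word (U_lr M) x ?v)"
    using run_word_conjugate[OF U V x] by simp
  also have "\<dots> = ?E *\<^sub>v (?V *\<^sub>v (cadj ?V *\<^sub>v run_word (U_lr M) x ?v))"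
    using E Vc V' r by simp
  also have "\<dots> = ?E *\<^sub>v run_word (U_lr M) x ?v"
    using V r by (simp add: unitary_mat_cancel)
  finally show ?thesis
    unfolding accept_prob_r_def accept_prob_lr_def absorb_left_endmarker_def by simp
qed

theorem theoremA1:
  fixes Alph :: "'a set" and M :: "'a mo_qfa_lr"
  assumes "finite Alph"
    and "wf_qfa_lr Alph M"
  shows "\<exists>M' :: 'a mo_qfa_r. wf_qfa_r Alph M' \<and>
           (\<forall>x. set x \<subseteq> Alph \<longrightarrow> accept_prob_r M' x = accept_prob_lr M x)"
  using assms(2) wf_qfa_r_absorb_left_endmarker accept_prob_r_absorb_left_endmarker
  by blast

end
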